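(* Let $(H,R)$ be a semiquasitriangular Hopf algebra, let $u=S(R^{(2)})R^{(1)}$ be its Drinfeld element, and let $T:H\to H$ be the map $T(h)=R^{(2)}h_2R'^{(2)}S(h_1)S(R^{(1)})h_3R'^{(1)}$ (i.e. $T=\mu\circ\nu$, with $\mu$ the multiplication). Then $u$ is invertible with $u^{-1}=R^{(2)}S^2(R^{(1)})$, and $S^2(h)=u\,T(h)\,u^{-1}$ for all $h\in H$.
   Context: All vector spaces are over a field $k$, $\otimes=\otimes_k$. For a Hopf algebra $H$ with comultiplication $\Delta$, counit $\epsilon$, antipode $S$, we use Sweedler notation $\Delta(h)=h_1\otimes h_2$, etc. $\operatorname{Z}(H)$ is the centre of $H$. For $R\in H\otimes H$ we write $R=R^{(1)}\otimes R^{(2)}$ (summation understood); $R'^{(1)}\otimes R'^{(2)}$ denotes another copy of $R$. Definition (semiquasitriangular Hopf algebra): a pair $(H,R)$ with $H$ a Hopf algebra with bijective antipode and $R\in H\otimes H$ invertible such that (1) $R^{(1)}_1\otimes R^{(1)}_2\otimes R^{(2)} = R^{(1)}\otimes R'^{(1)}\otimes R^{(2)}R'^{(2)}$; (2) $R^{(1)}\otimes R^{(2)}_1\otimes R^{(2)}_2 = R^{(1)}R'^{(1)}\otimes R'^{(2)}\otimes R^{(2)}$; (3) $R^{(1)}\otimes R^{(2)}_2R'^{(1)}\otimes R^{(2)}_1R'^{(2)} = R^{(1)}\otimes R'^{(1)}R^{(2)}_1\otimes R'^{(2)}R^{(2)}_2$; (4) $R^{(1)}_2R'^{(1)}\otimes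 R^{(1)}_1R'^{(2)}\otimes R^{(2)} = R'^{(1)}R^{(1)}_1\otimes R'^{(2)}R^{(1)}_2\otimes R^{(2)}$; (5) $\nu(h):=R^{(2)}h_2R'^{(2)}\otimes S(h_1)S(R^{(1)})h_3R'^{(1)}\in H\otimes\operatorname{Z}(H)$ for all $h\in H$; (6) $\nu(h)=R^{(1)}h_2R'^{(1)}\otimes S(R'^{(2)})S(h_1)R^{(2)}h_3$ for all $h\in H$. The Drinfeld element of $(H,R)$ is $u:=S(R^{(2)})R^{(1)}$. *)

theory Defs
  imports Main "HOL.Vector_Spaces"
begin

text \<open>Elements of H (x) H and H (x) H (x) H are represented by finite formal sums of
pure tensors (lists of pairs / triples).  Two formal sums denote the same element of the
tensor product over the field k iff they agree under every functional f (x) g (resp.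
f (x) g (x) h) with f, g, h k-linear functionals on H (the canonical map
V (x) W -> (V* (x) W* )* is injective over a field).\<close>

type_synonym 'h tens2 = "('h \<times> 'h) list"
type_synonym 'h tens3 = "('h \<times> 'h \<times> 'h) list"

definition lin_fun :: "('k::field \<Rightarrow> 'h::ab_group_add \<Rightarrow> 'h) \<Rightarrow> ('h \<Rightarrow> 'k) \<Rightarrow> bool" where
  "lin_fun sc f \<longleftrightarrow> Vector_Spaces.linear sc ((*)) f"

definition teq2 :: "('k::field \<Rightarrow> 'h::ab_group_add \<Rightarrow> 'h) \<Rightarrow> 'h tens2 \<Rightarrow> 'h tens2 \<Rightarrow> bool" where
  "teq2 sc xs ys \<longleftrightarrow> (\<forall>(f::'h \<Rightarrow> 'k) g. lin_fun sc f \<and> lin_fun sc g \<longrightarrow>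
      (\<Sum>(a,b)\<leftarrow>xs. f a * g b) = (\<Sum>(a,b)\<leftarrow>ys. f a * g b))"

definition teq3 :: "('k::field \<Rightarrow> 'h::ab_group_add \<Rightarrow> 'h) \<Rightarrow> 'h tens3 \<Rightarrow> 'h tens3 \<Rightarrow> bool" where
  "teq3 sc xs ys \<longleftrightarrow> (\<forall>(f::'h \<Rightarrow> 'k) g h. lin_fun sc f \<and> lin_fun sc g \<and> lin_fun sc h \<longrightarrow>
      (\<Sum>(a,b,c)\<leftarrow>xs. f a * g b * h c) = (\<Sum>(a,b,c)\<leftarrow>ys. f a * g b * h c))"

definition tmul2 :: "'h::times tens2 \<Rightarrow> 'h tens2 \<Rightarrow> 'h tens2" where
  "tmul2 xs ys = [(a * c, b * d). (a,b) \<leftarrow> xs, (c,d) \<leftarrow> ys]"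

definition Delta3 :: "('h \<Rightarrow> 'h tens2) \<Rightarrow> 'h \<Rightarrow> 'h tens3" where
  "Delta3 \<Delta> h = [(x, y, b). (a,b) \<leftarrow> \<Delta> h, (x,y) \<leftarrow> \<Delta> a]"

definition central :: "'h::times \<Rightarrow> bool" where
  "central z \<longleftrightarrow> (\<forall>x. z * x = x * z)"

text \<open>H is a k-algebra (ring structure from the type class ring_1, scalar action sc),
with comultiplication \<Delta>, counit \<epsilon>, antipode S (bijective).\<close>
definition hopf_algebra ::
  "('k::field \<Rightarrow> 'h::ring_1 \<Rightarrow> 'h) \<Rightarrow> ('h \<Rightarrow> 'h tens2) \<Rightarrow> ('h \<Rightarrow> 'k) \<Rightarrow> ('h \<Rightarrow> 'h) \<Rightarrow> bool" where
  "hopf_algebra sc \<Delta> \<epsilon> S \<longleftrightarrow>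
     vector_space sc \<and>
     (\<forall>c a b. sc c (a * b) = sc c a * b \<and> sc c (a * b) = a * sc c b) \<and>
     (\<forall>a b. teq2 sc (\<Delta> (a + b)) (\<Delta> a @ \<Delta> b)) \<and>
     (\<forall>c a. teq2 sc (\<Delta> (sc c a)) [(sc c x, y). (x,y) \<leftarrow> \<Delta> a]) \<and>
     (\<forall>h. teq3 sc (Delta3 \<Delta> h) [(a, x, y). (a,b) \<leftarrow> \<Delta> h, (x,y) \<leftarrow> \<Delta> b]) \<and>
     lin_fun sc \<epsilon> \<and>
     (\<forall>h. (\<Sum>(a,b)\<leftarrow>\<Delta> h. sc (\<epsilon> a) b) = h \<and> (\<Sum>(a,b)\<leftarrow>\<Delta> h. sc (\<epsilon> b) a) = h) \<and>
     (\<forall>a b. teq2 sc (\<Delta> (a * b)) (tmul2 (\<Delta> a) (\<Delta> b))) \<and>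
     teq2 sc (\<Delta> 1) [(1, 1)] \<and>
     (\<forall>a b. \<epsilon> (a * b) = \<epsilon> a * \<epsilon> b) \<and> \<epsilon> 1 = 1 \<and>
     Vector_Spaces.linear sc sc S \<and>
     (\<forall>h. (\<Sum>(a,b)\<leftarrow>\<Delta> h. S a * b) = sc (\<epsilon> h) 1 \<and> (\<Sum>(a,b)\<leftarrow>\<Delta> h. a * S b) = sc (\<epsilon> h) 1) \<and>
     bij S"

definition nu :: "('h \<Rightarrow> 'h tens2) \<Rightarrow> ('h \<Rightarrow> 'h) \<Rightarrow> 'h::times tens2 \<Rightarrow> 'h \<Rightarrow> 'h tens2" where
  "nu \<Delta> S R h = [(s * y * s', S x * S r * z * r'). (r,s) \<leftarrow> R, (x,y,z) \<leftarrow> Delta3 \<Delta> h, (r',s') \<leftarrow> R]"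

definition semiquasitriangular ::
  "('k::field \<Rightarrow> 'h::ring_1 \<Rightarrow> 'h) \<Rightarrow> ('h \<Rightarrow> 'h tens2) \<Rightarrow> ('h \<Rightarrow> 'k) \<Rightarrow> ('h \<Rightarrow> 'h) \<Rightarrow> 'h tens2 \<Rightarrow> bool" where
  "semiquasitriangular sc \<Delta> \<epsilon> S R \<longleftrightarrow>
     hopf_algebra sc \<Delta> \<epsilon> S \<and>
     (\<exists>Ri. teq2 sc (tmul2 R Ri) [(1,1)] \<and> teq2 sc (tmul2 Ri R) [(1,1)]) \<and>
     \<comment> \<open>(1)\<close>
     teq3 sc [(x, y, s). (r,s) \<leftarrow> R, (x,y) \<leftarrow> \<Delta> r]
             [(r, r', s * s'). (r,s) \<leftarrow> R, (r',s') \<leftarrow> R] \<and>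
     \<comment> \<open>(2)\<close>
     teq3 sc [(r, x, y). (r,s) \<leftarrow> R, (x,y) \<leftarrow> \<Delta> s]
             [(r * r', s', s). (r,s) \<leftarrow> R, (r',s') \<leftarrow> R] \<and>
     \<comment> \<open>(3)\<close>
     teq3 sc [(r, y * r', x * s'). (r,s) \<leftarrow> R, (x,y) \<leftarrow> \<Delta> s, (r',s') \<leftarrow> R]
             [(r, r' * x, s' * y). (r,s) \<leftarrow> R, (x,y) \<leftarrow> \<Delta> s, (r',s') \<leftarrow> R] \<and>
     \<comment> \<open>(4)\<close>
     teq3 sc [(y * r', x * s', s). (r,s) \<leftarrow> R, (x,y) \<leftarrow> \<Delta> r, (r',s') \<leftarrow> R]
             [(r' * x, s' * y, s). (r,s) \<leftarrow> R, (x,y) \<leftarrow> \<Delta> r, (r',s') \<leftarrow> R] \<and>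
     \<comment> \<open>(5): nu(h) lies in H (x) Z(H)\<close>
     (\<forall>h. \<exists>zs. (\<forall>(a,z) \<in> set zs. central z) \<and> teq2 sc (nu \<Delta> S R h) zs) \<and>
     \<comment> \<open>(6)\<close>
     (\<forall>h. teq2 sc (nu \<Delta> S R h)
             [(r * y * r', S s' * S x * s * z). (r,s) \<leftarrow> R, (x,y,z) \<leftarrow> Delta3 \<Delta> h, (r',s') \<leftarrow> R])"

definition drinfeld_u :: "('h \<Rightarrow> 'h) \<Rightarrow> 'h::{times,comm_monoid_add} tens2 \<Rightarrow> 'h" where
  "drinfeld_u S R = (\<Sum>(r,s)\<leftarrow>R. S s * r)"

definition T_map :: "('h \<Rightarrow> 'h tens2) \<Rightarrow> ('h \<Rightarrow> 'h) \<Rightarrow> 'h::{times,comm_monoid_add} tens2 \<Rightarrow> 'h \<Rightarrow> 'h" where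
  "T_map \<Delta> S R h = (\<Sum>(a,b)\<leftarrow>nu \<Delta> S R h. a * b)"

end

theory Submission
  imports Defs
begin

(* The axioms only assert that two formal tensors agree under all functionals f (x) g (x) h.
   Expanding in coordinates with respect to a basis of H extends this to arbitrary
   multilinear maps, after which everything is a computation in Sweedler notation.

   From (1), (2) and the invertibility of R one gets
   (eps (x) id) R = (id (x) eps) R = 1, and then R^(2) u R^(1) = 1.  Every product u F(x)
   can be rewritten as S^2(x_3) S(x_2) u F(x_1); with (1) and (4) this gives v u = 1 for
   v = R^(2) S^2(R^(1)), and with the centrality (5) and the second form (6) of nu it gives
   u T(x) = S^2(x) u.  As S^2 is surjective, v = S^2(h) for some h, so u T(h) = v u = 1:
   u has the right inverse T(h), hence u v = 1 and S^2(x) = u T(x) v. *)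

lemma sum_list_map_sum_swap:
  "(\<Sum>x\<leftarrow>xs. \<Sum>e\<in>E. f x e) = (\<Sum>e\<in>E. \<Sum>x\<leftarrow>xs. f x e)"
  by (induction xs) (auto simp: sum.distrib)

lemma sum_list_concat: "sum_list (concat xss) = (\<Sum>xs\<leftarrow>xss. sum_list xs)"
  by (induction xss) auto

lemma idempotent_right_invertible_eq_one:
  fixes c :: "'a::monoid_mult"
  assumes "c * c = c" and "c * d = 1"
  shows "c = 1"
  by (metis assms mult.assoc mult_1_right)

lemma vector_space_field_self: "vector_space ((*) :: 'k::field \<Rightarrow> 'k \<Rightarrow> 'k)"
  by unfold_locales (auto simp: algebra_simps)

context vector_space_pair
begin

lemma sum_list_scale_left: "(\<Sum>x\<leftarrow>xs. s2 (g x) v) = s2 (\<Sum>x\<leftarrow>xs. g x) v"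
  by (induction xs) (auto simp: vs2.scale_left_distrib)

lemma linear_maps_finite_coordinates:
  assumes "finite X"
  obtains E and c :: "'b \<Rightarrow> 'b \<Rightarrow> 'a" where "finite E" "\<And>e. lin_fun s1 (c e)"
    "\<And>F x. Vector_Spaces.linear s1 s2 F \<Longrightarrow> x \<in> X \<Longrightarrow> F x = (\<Sum>e\<in>E. s2 (c e x) (F e))"
proof -
  obtain B where B: "vs1.independent B" "vs1.span B = UNIV"
    using vs1.basis_exists[of UNIV] by (metis subset_UNIV subset_antisym)
  define c where "c e x = vs1.representation B x e" for e x
  define E where "E = (\<Union>x\<in>X. {e. c e x \<noteq> 0})"
  have "finite E"
    unfolding E_def c_def using assms vs1.finite_representation by simp
  moreover have "lin_fun s1 (c e)" for e
    unfolding lin_fun_def c_def by (rule vs1.linear_representation[OF B])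
  moreover have "F x = (\<Sum>e\<in>E. s2 (c e x) (F e))" if F: "Vector_Spaces.linear s1 s2 F" and "x \<in> X" for F x
  proof -
    have "(\<Sum>e\<in>E. s1 (c e x) e) = (\<Sum>e\<in>{e. c e x \<noteq> 0}. s1 (c e x) e)"
      using \<open>finite E\<close> \<open>x \<in> X\<close> by (intro sum.mono_neutral_right) (auto simp: E_def)
    also have "\<dots> = x"
      unfolding c_def using B(1) by (rule vs1.sum_nonzero_representation_eq) (simp add: B(2))
    finally have "F x = F (\<Sum>e\<in>E. s1 (c e x) e)"
      by simp
    then show ?thesis
      by (simp add: linear_sum[OF F] linear_scale[OF F])
  qed
  ultimately show ?thesis by (rule that)
qed

lemma bilinear_coordinates:
  assumes expand: "\<And>F x. Vector_Spaces.linear s1 s2 F \<Longrightarrow> x \<in> X \<Longrightarrow> F x = (\<Sum>e\<in>E. s2 (c e x) (F e))"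
    and lin1: "\<And>b. Vector_Spaces.linear s1 s2 (\<lambda>a. \<Phi> a b)" and lin2: "\<And>a. Vector_Spaces.linear s1 s2 (\<Phi> a)"
    and "a \<in> X" "b \<in> X"
  shows "\<Phi> a b = (\<Sum>e\<in>E. \<Sum>e'\<in>E. s2 (c e a * c e' b) (\<Phi> e e'))"
proof -
  have "\<Phi> a b = (\<Sum>e\<in>E. s2 (c e a) (\<Phi> e b))"
    using expand[OF lin1 \<open>a \<in> X\<close>] by simp
  also have "\<dots> = (\<Sum>e\<in>E. s2 (c e a) (\<Sum>e'\<in>E. s2 (c e' b) (\<Phi> e e')))"
    using expand[OF lin2 \<open>b \<in> X\<close>] by simp
  finally show ?thesis
    by (simp add: vs2.scale_sum_right)
qed

lemma trilinear_coordinates: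
  assumes expand: "\<And>F x. Vector_Spaces.linear s1 s2 F \<Longrightarrow> x \<in> X \<Longrightarrow> F x = (\<Sum>e\<in>E. s2 (c e x) (F e))"
    and lin1: "\<And>b d. Vector_Spaces.linear s1 s2 (\<lambda>a. \<Phi> a b d)"
    and lin2: "\<And>a d. Vector_Spaces.linear s1 s2 (\<lambda>b. \<Phi> a b d)"
    and lin3: "\<And>a b. Vector_Spaces.linear s1 s2 (\<Phi> a b)"
    and "a \<in> X" "b \<in> X" "d \<in> X"
  shows "\<Phi> a b d = (\<Sum>e\<in>E. \<Sum>e'\<in>E. \<Sum>e''\<in>E. s2 (c e a * c e' b * c e'' d) (\<Phi> e e' e''))"
proof -
  have "\<Phi> a b d = (\<Sum>e\<in>E. s2 (c e a) (\<Phi> e b d))"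
    using expand[OF lin1 \<open>a \<in> X\<close>] by simp
  also have "\<dots> = (\<Sum>e\<in>E. s2 (c e a) (\<Sum>e'\<in>E. s2 (c e' b) (\<Phi> e e' d)))"
    using expand[OF lin2 \<open>b \<in> X\<close>] by simp
  also have "\<dots> = (\<Sum>e\<in>E. s2 (c e a) (\<Sum>e'\<in>E. s2 (c e' b) (\<Sum>e''\<in>E. s2 (c e'' d) (\<Phi> e e' e''))))"
    using expand[OF lin3 \<open>d \<in> X\<close>] by simp
  finally show ?thesis
    by (simp add: vs2.scale_sum_right mult.assoc)
qed

lemma teq2_sum_list_bilinear:
  assumes "teq2 s1 xs ys"
    and lin1: "\<And>b. Vector_Spaces.linear s1 s2 (\<lambda>a. \<Phi> a b)" and lin2: "\<And>a. Vector_Spaces.linear s1 s2 (\<Phi> a)"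
  shows "(\<Sum>(a,b)\<leftarrow>xs. \<Phi> a b) = (\<Sum>(a,b)\<leftarrow>ys. \<Phi> a b)"
proof -
  define X where "X = fst ` set (xs @ ys) \<union> snd ` set (xs @ ys)"
  have "finite X" unfolding X_def by simp
  obtain E c where "finite E" and c: "\<And>e. lin_fun s1 (c e)"
    and expand: "\<And>F x. Vector_Spaces.linear s1 s2 F \<Longrightarrow> x \<in> X \<Longrightarrow> F x = (\<Sum>e\<in>E. s2 (c e x) (F e))"
    using linear_maps_finite_coordinates[OF \<open>finite X\<close>] by blast
  have "(\<Sum>(a,b)\<leftarrow>zs. \<Phi> a b) =
      (\<Sum>e\<in>E. \<Sum>e'\<in>E. s2 (\<Sum>(a,b)\<leftarrow>zs. c e a * c e' b) (\<Phi> e e'))"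
    if "set zs \<subseteq> set (xs @ ys)" for zs
  proof -
    have "\<Phi> a b = (\<Sum>e\<in>E. \<Sum>e'\<in>E. s2 (c e a * c e' b) (\<Phi> e e'))" if "(a, b) \<in> set zs" for a b
    proof -
      have "a \<in> X" "b \<in> X"
        using that \<open>set zs \<subseteq> _\<close> unfolding X_def by (force, force)
      then show ?thesis
        using bilinear_coordinates[OF expand lin1 lin2] by (simp only:)
    qed
    then have "(\<Sum>(a,b)\<leftarrow>zs. \<Phi> a b) =
        (\<Sum>(a,b)\<leftarrow>zs. \<Sum>e\<in>E. \<Sum>e'\<in>E. s2 (c e a * c e' b) (\<Phi> e e'))"
      by (intro arg_cong[where f=sum_list] map_cong) auto
    then show ?thesis
      by (simp add: case_prod_unfold sum_list_map_sum_swap sum_list_scale_left)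
  qed
  moreover have "(\<Sum>(a,b)\<leftarrow>xs. c e a * c e' b) = (\<Sum>(a,b)\<leftarrow>ys. c e a * c e' b)" for e e'
    using assms(1) c unfolding teq2_def by blast
  ultimately show ?thesis by simp
qed

lemma teq3_sum_list_trilinear:
  assumes "teq3 s1 xs ys"
    and lin1: "\<And>b d. Vector_Spaces.linear s1 s2 (\<lambda>a. \<Phi> a b d)"
    and lin2: "\<And>a d. Vector_Spaces.linear s1 s2 (\<lambda>b. \<Phi> a b d)"
    and lin3: "\<And>a b. Vector_Spaces.linear s1 s2 (\<Phi> a b)"
  shows "(\<Sum>(a,b,d)\<leftarrow>xs. \<Phi> a b d) = (\<Sum>(a,b,d)\<leftarrow>ys. \<Phi> a b d)"
proof -
  define X where
    "X = fst ` set (xs @ ys) \<union> fst ` snd ` set (xs @ ys) \<union> snd ` snd ` set (xs @ ys)"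
  have "finite X" unfolding X_def by simp
  obtain E c where "finite E" and c: "\<And>e. lin_fun s1 (c e)"
    and expand: "\<And>F x. Vector_Spaces.linear s1 s2 F \<Longrightarrow> x \<in> X \<Longrightarrow> F x = (\<Sum>e\<in>E. s2 (c e x) (F e))"
    using linear_maps_finite_coordinates[OF \<open>finite X\<close>] by blast
  have "(\<Sum>(a,b,d)\<leftarrow>zs. \<Phi> a b d) = (\<Sum>e\<in>E. \<Sum>e'\<in>E. \<Sum>e''\<in>E.
      s2 (\<Sum>(a,b,d)\<leftarrow>zs. c e a * c e' b * c e'' d) (\<Phi> e e' e''))"
    if "set zs \<subseteq> set (xs @ ys)" for zs
  proof -
    have "\<Phi> a b d = (\<Sum>e\<in>E. \<Sum>e'\<in>E. \<Sum>e''\<in>E. s2 (c e a * c e' b * c e'' d) (\<Phi> e e' e''))"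
      if "(a, b, d) \<in> set zs" for a b d
    proof -
      have "a \<in> X" "b \<in> X" "d \<in> X"
        using that \<open>set zs \<subseteq> _\<close> unfolding X_def by (force, force, force)
      then show ?thesis
        using trilinear_coordinates[OF expand lin1 lin2 lin3] by (simp only:)
    qed
    then have "(\<Sum>(a,b,d)\<leftarrow>zs. \<Phi> a b d) = (\<Sum>(a,b,d)\<leftarrow>zs.
        \<Sum>e\<in>E. \<Sum>e'\<in>E. \<Sum>e''\<in>E. s2 (c e a * c e' b * c e'' d) (\<Phi> e e' e''))"
      by (intro arg_cong[where f=sum_list] map_cong) auto
    then show ?thesis
      by (simp add: case_prod_unfold sum_list_map_sum_swap sum_list_scale_left)
  qed
  moreover have "(\<Sum>(a,b,d)\<leftarrow>xs. c e a * c e' b * c e'' d) =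
      (\<Sum>(a,b,d)\<leftarrow>ys. c e a * c e' b * c e'' d)" for e e' e''
    using assms(1) c unfolding teq3_def by blast
  ultimately show ?thesis by simp
qed

end

definition tsum :: "('a \<times> 'a) list \<Rightarrow> ('a \<Rightarrow> 'a \<Rightarrow> 'b::comm_monoid_add) \<Rightarrow> 'b" where
  "tsum xs f = (\<Sum>(a,b)\<leftarrow>xs. f a b)"

lemma tsum_Nil [simp]: "tsum [] f = 0"
  and tsum_Cons [simp]: "tsum ((a,b) # xs) f = f a b + tsum xs f"
  and tsum_append [simp]: "tsum (xs @ ys) f = tsum xs f + tsum ys f"
  by (simp_all add: tsum_def)

lemma tsum_zero: "tsum xs (\<lambda>a b. 0) = 0"
  by (induction xs) auto

lemma tsum_add: "tsum xs (\<lambda>a b. f a b + g a b) = tsum xs f + tsum xs g"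
  by (induction xs) (auto simp: algebra_simps)

lemma tsum_swap: "tsum xs (\<lambda>a b. tsum ys (f a b)) = tsum ys (\<lambda>c d. tsum xs (\<lambda>a b. f a b c d))"
  by (induction xs) (auto simp: tsum_zero tsum_add)

lemma tsum_mult_left: "(c::'a::semiring_0) * tsum xs f = tsum xs (\<lambda>a b. c * f a b)"
  by (induction xs) (auto simp: algebra_simps)

lemma tsum_mult_right: "tsum xs f * (c::'a::semiring_0) = tsum xs (\<lambda>a b. f a b * c)"
  by (induction xs) (auto simp: algebra_simps)

lemma tsum_cong: "(\<And>a b. (a,b) \<in> set xs \<Longrightarrow> f a b = g a b) \<Longrightarrow> tsum xs f = tsum xs g"
  by (induction xs) auto

lemma tsum_map_fst: "tsum (map (\<lambda>(a,b). (g a, b)) xs) f = tsum xs (\<lambda>a b. f (g a) b)"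
  by (induction xs) auto

lemma (in vector_space_pair) linear_tsum:
  "Vector_Spaces.linear s1 s2 F \<Longrightarrow> F (tsum xs f) = tsum xs (\<lambda>a b. F (f a b))"
  by (induction xs) (auto simp: linear_add linear_0)

lemma (in vector_space) scale_tsum_right: "scale c (tsum xs f) = tsum xs (\<lambda>a b. scale c (f a b))"
  by (induction xs) (auto simp: scale_right_distrib)

lemma (in vector_space) scale_tsum_left: "tsum xs (\<lambda>a b. scale (g a b) v) = scale (tsum xs g) v"
  by (induction xs) (auto simp: scale_left_distrib)

locale semiquasitriangular_hopf =
  fixes sc :: "'k::field \<Rightarrow> 'h::ring_1 \<Rightarrow> 'h"
    and \<Delta> :: "'h \<Rightarrow> ('h \<times> 'h) list" and \<epsilon> :: "'h \<Rightarrow> 'k" and S :: "'h \<Rightarrow> 'h"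
    and R :: "('h \<times> 'h) list"
  assumes semiquasitriangular: "semiquasitriangular sc \<Delta> \<epsilon> S R"
begin

abbreviation k_linear :: "('h \<Rightarrow> 'h) \<Rightarrow> bool" where
  "k_linear \<equiv> Vector_Spaces.linear sc sc"

lemma hopf_algebra: "hopf_algebra sc \<Delta> \<epsilon> S"
  using semiquasitriangular unfolding semiquasitriangular_def by blast

lemma vector_space: "vector_space sc"
  using hopf_algebra unfolding hopf_algebra_def by blast

sublocale H: vector_space sc
  by (fact vector_space)

sublocale HH: vector_space_pair sc sc
  by unfold_locales

sublocale Hk: vector_space_pair sc "(*)"
  using vector_space_field_self by (simp add: vector_space_pair_def vector_space)

lemma scale_mult_left [simp]: "sc c a * b = sc c (a * b)"
  and scale_mult_right [simp]: "a * sc c b = sc c (a * b)"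
  using hopf_algebra unfolding hopf_algebra_def by metis+

lemma comult_add: "teq2 sc (\<Delta> (a + b)) (\<Delta> a @ \<Delta> b)"
  and comult_scale: "teq2 sc (\<Delta> (sc c a)) [(sc c x, y). (x,y) \<leftarrow> \<Delta> a]"
  and comult_coassoc_teq3: "teq3 sc (Delta3 \<Delta> h) [(a, x, y). (a,b) \<leftarrow> \<Delta> h, (x,y) \<leftarrow> \<Delta> b]"
  and counit_linear: "Vector_Spaces.linear sc (*) \<epsilon>"
  and comult_mult_teq2: "teq2 sc (\<Delta> (a * b)) (tmul2 (\<Delta> a) (\<Delta> b))"
  and comult_one_teq2: "teq2 sc (\<Delta> 1) [(1, 1)]"
  and counit_mult: "\<epsilon> (a * b) = \<epsilon> a * \<epsilon> b"
  and counit_one: "\<epsilon> 1 = 1"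
  and antipode_linear: "k_linear S"
  and antipode_bij: "bij S"
  using hopf_algebra unfolding hopf_algebra_def lin_fun_def by blast+

lemma counit_left: "tsum (\<Delta> h) (\<lambda>a b. sc (\<epsilon> a) b) = h"
  and counit_right: "tsum (\<Delta> h) (\<lambda>a b. sc (\<epsilon> b) a) = h"
  and antipode_left: "tsum (\<Delta> h) (\<lambda>a b. S a * b) = sc (\<epsilon> h) 1"
  and antipode_right: "tsum (\<Delta> h) (\<lambda>a b. a * S b) = sc (\<epsilon> h) 1"
  using hopf_algebra unfolding hopf_algebra_def tsum_def by blast+

lemma k_linear_id: "k_linear (\<lambda>x. x)"
  by (fact H.linear_id[unfolded id_def])

lemma k_linear_mult_right: "k_linear f \<Longrightarrow> k_linear (\<lambda>x. f x * c)"
  and k_linear_mult_left: "k_linear f \<Longrightarrow> k_linear (\<lambda>x. c * f x)"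
  and k_linear_antipode: "k_linear f \<Longrightarrow> k_linear (\<lambda>x. S (f x))"
  and k_linear_scale: "k_linear f \<Longrightarrow> k_linear (\<lambda>x. sc a (f x))"
  and k_linear_counit_scale: "k_linear f \<Longrightarrow> k_linear (\<lambda>x. sc (\<epsilon> (f x)) c)"
  and k_linear_add: "k_linear f \<Longrightarrow> k_linear g \<Longrightarrow> k_linear (\<lambda>x. f x + g x)"
  using antipode_linear counit_linear
  by (auto simp: linear_iff vector_space vector_space_field_self algebra_simps)

lemma k_linear_tsum: "(\<And>a b. k_linear (F a b)) \<Longrightarrow> k_linear (\<lambda>x. tsum xs (\<lambda>a b. F a b x))"
proof (induction xs)
  case Nil
  then show ?case by (simp add: linear_iff vector_space)
next
  case (Cons p xs)
  then show ?case
    by (cases p) (simp, rule k_linear_add, simp_all)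
qed

lemma teq2_tsum:
  "teq2 sc xs ys \<Longrightarrow> (\<And>b. k_linear (\<lambda>a. \<Phi> a b)) \<Longrightarrow> (\<And>a. k_linear (\<Phi> a)) \<Longrightarrow>
   tsum xs \<Phi> = tsum ys \<Phi>"
  unfolding tsum_def by (rule HH.teq2_sum_list_bilinear)

lemma k_linear_tsum_comult:
  assumes "\<And>b. k_linear (\<lambda>a. F a b)" "\<And>a. k_linear (F a)" "k_linear f"
  shows "k_linear (\<lambda>x. tsum (\<Delta> (f x)) F)"
  unfolding linear_iff
proof (intro conjI allI vector_space)
  show "tsum (\<Delta> (f (x + y))) F = tsum (\<Delta> (f x)) F + tsum (\<Delta> (f y)) F" for x y
    using teq2_tsum[OF comult_add assms(1,2)] HH.linear_add[OF assms(3)] by simp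
  show "tsum (\<Delta> (f (sc c x))) F = sc c (tsum (\<Delta> (f x)) F)" for c x
    using teq2_tsum[OF comult_scale assms(1,2)] HH.linear_scale[OF assms(3)] HH.linear_scale[OF assms(1)]
    by (simp add: tsum_map_fst H.scale_tsum_right)
qed

lemmas k_linear_intros = k_linear_id k_linear_mult_right k_linear_mult_left k_linear_antipode
  k_linear_scale k_linear_counit_scale k_linear_add k_linear_tsum k_linear_tsum_comult

lemma comult_coassoc:
  assumes "\<And>b d. k_linear (\<lambda>a. \<Phi> a b d)" "\<And>a d. k_linear (\<lambda>b. \<Phi> a b d)"
    "\<And>a b. k_linear (\<Phi> a b)"
  shows "tsum (\<Delta> h) (\<lambda>a b. tsum (\<Delta> a) (\<lambda>x y. \<Phi> x y b)) =
    tsum (\<Delta> h) (\<lambda>a b. tsum (\<Delta> b) (\<lambda>x y. \<Phi> a x y))"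
  using HH.teq3_sum_list_trilinear[OF comult_coassoc_teq3 assms, of h]
  by (simp add: Delta3_def tsum_def sum_list_concat map_concat case_prod_unfold o_def)

lemma comult_mult:
  assumes "\<And>b. k_linear (\<lambda>a. \<Phi> a b)" "\<And>a. k_linear (\<Phi> a)"
  shows "tsum (\<Delta> (a * b)) \<Phi> = tsum (\<Delta> a) (\<lambda>x y. tsum (\<Delta> b) (\<lambda>x' y'. \<Phi> (x * x') (y * y')))"
  using teq2_tsum[OF comult_mult_teq2 assms, of a b]
  by (simp add: tmul2_def tsum_def sum_list_concat map_concat case_prod_unfold o_def)

lemma comult_one:
  assumes "\<And>b. k_linear (\<lambda>a. \<Phi> a b)" "\<And>a. k_linear (\<Phi> a)"
  shows "tsum (\<Delta> 1) \<Phi> = \<Phi> 1 1"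
  using teq2_tsum[OF comult_one_teq2 assms] by simp

lemma R_invertible: "\<exists>Ri. teq2 sc (tmul2 R Ri) [(1,1)] \<and> teq2 sc (tmul2 Ri R) [(1,1)]"
  and R_comult_fst_teq3: "teq3 sc [(x, y, s). (r,s) \<leftarrow> R, (x,y) \<leftarrow> \<Delta> r]
    [(r, r', s * s'). (r,s) \<leftarrow> R, (r',s') \<leftarrow> R]"
  and R_comult_snd_teq3: "teq3 sc [(r, x, y). (r,s) \<leftarrow> R, (x,y) \<leftarrow> \<Delta> s]
    [(r * r', s', s). (r,s) \<leftarrow> R, (r',s') \<leftarrow> R]"
  and R_comult_fst_op_teq3: "teq3 sc [(y * r', x * s', s). (r,s) \<leftarrow> R, (x,y) \<leftarrow> \<Delta> r, (r',s') \<leftarrow> R]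
    [(r' * x, s' * y, s). (r,s) \<leftarrow> R, (x,y) \<leftarrow> \<Delta> r, (r',s') \<leftarrow> R]"
  and nu_central_teq2: "\<exists>zs. (\<forall>(a,z) \<in> set zs. central z) \<and> teq2 sc (nu \<Delta> S R h) zs"
  and nu_alt_teq2: "teq2 sc (nu \<Delta> S R h)
    [(r * y * r', S s' * S x * s * z). (r,s) \<leftarrow> R, (x,y,z) \<leftarrow> Delta3 \<Delta> h, (r',s') \<leftarrow> R]"
  using semiquasitriangular unfolding semiquasitriangular_def by blast+

lemma R_comult_fst:
  assumes "\<And>b d. k_linear (\<lambda>a. \<Phi> a b d)" "\<And>a d. k_linear (\<lambda>b. \<Phi> a b d)"
    "\<And>a b. k_linear (\<Phi> a b)"
  shows "tsum R (\<lambda>r s. tsum (\<Delta> r) (\<lambda>x y. \<Phi> x y s)) = tsum R (\<lambda>r s. tsum R (\<lambda>r' s'. \<Phi> r r' (s * s')))"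
  using HH.teq3_sum_list_trilinear[OF R_comult_fst_teq3 assms]
  by (simp add: tsum_def sum_list_concat map_concat case_prod_unfold o_def)

lemma R_comult_snd:
  assumes "\<And>b d. k_linear (\<lambda>a. \<Phi> a b d)" "\<And>a d. k_linear (\<lambda>b. \<Phi> a b d)"
    "\<And>a b. k_linear (\<Phi> a b)"
  shows "tsum R (\<lambda>r s. tsum (\<Delta> s) (\<lambda>x y. \<Phi> r x y)) = tsum R (\<lambda>r s. tsum R (\<lambda>r' s'. \<Phi> (r * r') s' s))"
  using HH.teq3_sum_list_trilinear[OF R_comult_snd_teq3 assms]
  by (simp add: tsum_def sum_list_concat map_concat case_prod_unfold o_def)

lemma R_comult_fst_op:
  assumes "\<And>b d. k_linear (\<lambda>a. \<Phi> a b d)" "\<And>a d. k_linear (\<lambda>b. \<Phi> a b d)"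
    "\<And>a b. k_linear (\<Phi> a b)"
  shows "tsum R (\<lambda>r s. tsum (\<Delta> r) (\<lambda>x y. tsum R (\<lambda>r' s'. \<Phi> (y * r') (x * s') s))) =
    tsum R (\<lambda>r s. tsum (\<Delta> r) (\<lambda>x y. tsum R (\<lambda>r' s'. \<Phi> (r' * x) (s' * y) s)))"
  using HH.teq3_sum_list_trilinear[OF R_comult_fst_op_teq3 assms]
  by (simp add: tsum_def sum_list_concat map_concat case_prod_unfold o_def)

lemma tsum_nu_alt:
  assumes "\<And>b. k_linear (\<lambda>a. \<Phi> a b)" "\<And>a. k_linear (\<Phi> a)"
  shows "tsum (nu \<Delta> S R h) \<Phi> = tsum R (\<lambda>r s. tsum (\<Delta> h) (\<lambda>a z. tsum (\<Delta> a) (\<lambda>x y.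
    tsum R (\<lambda>r' s'. \<Phi> (r * y * r') (S s' * S x * s * z)))))"
  using teq2_tsum[OF nu_alt_teq2 assms, of h]
  by (simp add: Delta3_def tsum_def sum_list_concat map_concat case_prod_unfold o_def)

lemma tsum_nu_central:
  assumes "\<And>b. k_linear (\<lambda>a. G a b)" "\<And>a. k_linear (G a)"
    and "\<And>b. k_linear (\<lambda>a. G' a b)" "\<And>a. k_linear (G' a)"
    and "\<And>a z. central z \<Longrightarrow> G a z = G' a z"
  shows "tsum (nu \<Delta> S R h) G = tsum (nu \<Delta> S R h) G'"
proof -
  obtain zs where zs: "\<forall>(a,z) \<in> set zs. central z" "teq2 sc (nu \<Delta> S R h) zs"
    using nu_central_teq2 by blast
  have "tsum (nu \<Delta> S R h) G = tsum zs G"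
    using teq2_tsum[OF zs(2) assms(1,2)] .
  also have "\<dots> = tsum zs G'"
    using zs(1) assms(5) by (intro tsum_cong) auto
  also have "\<dots> = tsum (nu \<Delta> S R h) G'"
    using teq2_tsum[OF zs(2) assms(3,4)] by simp
  finally show ?thesis .
qed

lemma R_right_inverse:
  obtains Ri where "\<And>\<Phi>. (\<And>b. k_linear (\<lambda>a. \<Phi> a b)) \<Longrightarrow> (\<And>a. k_linear (\<Phi> a)) \<Longrightarrow>
    tsum R (\<lambda>r s. tsum Ri (\<lambda>a b. \<Phi> (r * a) (s * b))) = \<Phi> 1 1"
proof -
  obtain Ri where Ri: "teq2 sc (tmul2 R Ri) [(1,1)]"
    using R_invertible by blast
  show ?thesis
    by (rule that, drule teq2_tsum[OF Ri], assumption)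
      (simp add: tmul2_def tsum_def sum_list_concat map_concat case_prod_unfold o_def)
qed

lemma antipode_scale: "S (sc c a) = sc c (S a)"
  by (rule HH.linear_scale[OF antipode_linear])

lemma counit_scale: "\<epsilon> (sc c a) = c * \<epsilon> a"
  by (rule Hk.linear_scale[OF counit_linear])

lemma antipode_tsum: "S (tsum xs f) = tsum xs (\<lambda>a b. S (f a b))"
  by (rule HH.linear_tsum[OF antipode_linear])

lemma counit_tsum: "\<epsilon> (tsum xs f) = tsum xs (\<lambda>a b. \<epsilon> (f a b))"
  by (rule Hk.linear_tsum[OF counit_linear])

lemma antipode_one [simp]: "S 1 = 1"
proof -
  have "tsum (\<Delta> 1) (\<lambda>x y. S x * y) = S 1 * 1"
    by (rule comult_one; intro k_linear_intros)
  then show ?thesis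
    using antipode_left[of 1] by (simp add: counit_one)
qed

lemma counit_comult: "tsum (\<Delta> h) (\<lambda>x y. \<epsilon> x * \<epsilon> y) = \<epsilon> h"
  using arg_cong[OF counit_left[of h], of \<epsilon>] by (simp add: counit_tsum counit_scale)

lemma antipode_right_pair:
  "tsum (\<Delta> a) (\<lambda>x y. tsum (\<Delta> b) (\<lambda>x' y'. x * x' * S y' * S y)) = sc (\<epsilon> a * \<epsilon> b) 1"
proof -
  have "tsum (\<Delta> a) (\<lambda>x y. tsum (\<Delta> b) (\<lambda>x' y'. x * x' * S y' * S y)) =
      tsum (\<Delta> a) (\<lambda>x y. x * tsum (\<Delta> b) (\<lambda>x' y'. x' * S y') * S y)"
    by (simp add: tsum_mult_left tsum_mult_right mult.assoc)
  also have "\<dots> = sc (\<epsilon> a * \<epsilon> b) 1"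
    by (simp add: antipode_right H.scale_tsum_right[symmetric] mult.commute)
  finally show ?thesis .
qed

lemma antipode_mult_convolution:
  "tsum (\<Delta> a) (\<lambda>x y. tsum (\<Delta> b) (\<lambda>x' y'. S (x * x') * sc (\<epsilon> y * \<epsilon> y') 1)) =
   tsum (\<Delta> a) (\<lambda>x y. tsum (\<Delta> b) (\<lambda>x' y'. sc (\<epsilon> x * \<epsilon> x') (S y' * S y)))"
proof -
  have "tsum (\<Delta> a) (\<lambda>x y. tsum (\<Delta> b) (\<lambda>x' y'. S (x * x') * sc (\<epsilon> y * \<epsilon> y') 1)) =
      tsum (\<Delta> a) (\<lambda>x y. tsum (\<Delta> y) (\<lambda>p q. tsum (\<Delta> b) (\<lambda>x' y'. tsum (\<Delta> y') (\<lambda>p' q'.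
        S (x * x') * (p * p' * S q' * S q)))))"
    by (simp add: antipode_right_pair[symmetric] tsum_mult_left, subst tsum_swap, rule refl)
  also have "\<dots> = tsum (\<Delta> a) (\<lambda>x y. tsum (\<Delta> x) (\<lambda>p q. tsum (\<Delta> b) (\<lambda>x' y'. tsum (\<Delta> x') (\<lambda>p' q'.
        S (p * p') * (q * q' * S y' * S y)))))"
  proof -
    have "tsum (\<Delta> b) (\<lambda>x' y'. tsum (\<Delta> y') (\<lambda>p' q'. S (p * x') * (q * p' * S q' * S y))) =
        tsum (\<Delta> b) (\<lambda>x' y'. tsum (\<Delta> x') (\<lambda>p' q'. S (p * p') * (q * q' * S y' * S y)))" for p q y
      by (rule comult_coassoc[symmetric]; intro k_linear_intros)
    then show ?thesis
      by (subst comult_coassoc[symmetric]; (intro k_linear_intros)?; simp)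
  qed
  also have "\<dots> = tsum (\<Delta> a) (\<lambda>x y. tsum (\<Delta> b) (\<lambda>x' y'. tsum (\<Delta> (x * x')) (\<lambda>m n. S m * n) * (S y' * S y)))"
    by (subst tsum_swap) (simp add: comult_mult k_linear_intros tsum_mult_right mult.assoc)
  also have "\<dots> = tsum (\<Delta> a) (\<lambda>x y. tsum (\<Delta> b) (\<lambda>x' y'. sc (\<epsilon> x * \<epsilon> x') (S y' * S y)))"
    by (simp add: antipode_left counit_mult)
  finally show ?thesis .
qed

lemma antipode_mult: "S (a * b) = S b * S a"
proof -
  have "S (a * b) = S (tsum (\<Delta> a) (\<lambda>x y. sc (\<epsilon> y) x) * tsum (\<Delta> b) (\<lambda>x' y'. sc (\<epsilon> y') x'))"
    by (simp add: counit_right)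
  also have "\<dots> = tsum (\<Delta> a) (\<lambda>x y. tsum (\<Delta> b) (\<lambda>x' y'. S (x * x') * sc (\<epsilon> y * \<epsilon> y') 1))"
    by (subst tsum_mult_right, simp only: tsum_mult_left)
      (simp add: antipode_tsum antipode_scale mult.commute)
  also have "\<dots> = tsum (\<Delta> b) (\<lambda>x' y'. sc (\<epsilon> x') (S y')) * tsum (\<Delta> a) (\<lambda>x y. sc (\<epsilon> x) (S y))"
    unfolding antipode_mult_convolution
    by (subst tsum_swap, subst tsum_mult_right, simp only: tsum_mult_left) (simp add: mult.commute)
  also have "\<dots> = S b * S a"
    by (simp add: antipode_scale[symmetric] antipode_tsum[symmetric] counit_left)
  finally show ?thesis .
qed

lemma R_counit_fst: "tsum R (\<lambda>r s. sc (\<epsilon> r) s) = 1"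
proof -
  define c where "c = tsum R (\<lambda>r s. sc (\<epsilon> r) s)"
  have "tsum R (\<lambda>r s. tsum (\<Delta> r) (\<lambda>x y. sc (\<epsilon> x) (sc (\<epsilon> y) s))) =
      tsum R (\<lambda>r s. tsum R (\<lambda>r' s'. sc (\<epsilon> r) (sc (\<epsilon> r') (s * s'))))"
    by (rule R_comult_fst; intro k_linear_intros)
  moreover have "tsum R (\<lambda>r s. tsum (\<Delta> r) (\<lambda>x y. sc (\<epsilon> x) (sc (\<epsilon> y) s))) = c"
    by (simp add: H.scale_tsum_left counit_comult c_def)
  moreover have "c * c = tsum R (\<lambda>r s. tsum R (\<lambda>r' s'. sc (\<epsilon> r) (sc (\<epsilon> r') (s * s'))))"
    unfolding c_def by (subst tsum_mult_right, simp only: tsum_mult_left) (simp add: mult.commute)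
  ultimately have "c * c = c" by simp
  obtain Ri where Ri: "\<And>\<Phi>. (\<And>b. k_linear (\<lambda>a. \<Phi> a b)) \<Longrightarrow> (\<And>a. k_linear (\<Phi> a)) \<Longrightarrow>
      tsum R (\<lambda>r s. tsum Ri (\<lambda>a b. \<Phi> (r * a) (s * b))) = \<Phi> 1 1"
    using R_right_inverse by blast
  have "c * tsum Ri (\<lambda>r s. sc (\<epsilon> r) s) = tsum R (\<lambda>r s. tsum Ri (\<lambda>a b. sc (\<epsilon> (r * a)) (s * b)))"
    unfolding c_def
    by (subst tsum_mult_right, simp only: tsum_mult_left) (simp add: counit_mult mult.commute)
  also have "\<dots> = 1"
    by (subst Ri; (intro k_linear_intros)?) (simp add: counit_one)
  finally show ?thesis
    using idempotent_right_invertible_eq_one[OF \<open>c * c = c\<close>] unfolding c_def by blast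
qed

lemma R_counit_snd: "tsum R (\<lambda>r s. sc (\<epsilon> s) r) = 1"
proof -
  define c where "c = tsum R (\<lambda>r s. sc (\<epsilon> s) r)"
  have "tsum R (\<lambda>r s. tsum (\<Delta> s) (\<lambda>x y. sc (\<epsilon> x) (sc (\<epsilon> y) r))) =
      tsum R (\<lambda>r s. tsum R (\<lambda>r' s'. sc (\<epsilon> s') (sc (\<epsilon> s) (r * r'))))"
    by (rule R_comult_snd; intro k_linear_intros)
  moreover have "tsum R (\<lambda>r s. tsum (\<Delta> s) (\<lambda>x y. sc (\<epsilon> x) (sc (\<epsilon> y) r))) = c"
    by (simp add: H.scale_tsum_left counit_comult c_def)
  moreover have "c * c = tsum R (\<lambda>r s. tsum R (\<lambda>r' s'. sc (\<epsilon> s') (sc (\<epsilon> s) (r * r'))))"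
    unfolding c_def by (subst tsum_mult_right, simp only: tsum_mult_left) (simp add: mult.commute)
  ultimately have "c * c = c" by simp
  obtain Ri where Ri: "\<And>\<Phi>. (\<And>b. k_linear (\<lambda>a. \<Phi> a b)) \<Longrightarrow> (\<And>a. k_linear (\<Phi> a)) \<Longrightarrow>
      tsum R (\<lambda>r s. tsum Ri (\<lambda>a b. \<Phi> (r * a) (s * b))) = \<Phi> 1 1"
    using R_right_inverse by blast
  have "c * tsum Ri (\<lambda>r s. sc (\<epsilon> s) r) = tsum R (\<lambda>r s. tsum Ri (\<lambda>a b. sc (\<epsilon> (s * b)) (r * a)))"
    unfolding c_def
    by (subst tsum_mult_right, simp only: tsum_mult_left) (simp add: counit_mult mult.commute)
  also have "\<dots> = 1"
    by (subst Ri[of "\<lambda>x y. sc (\<epsilon> y) x"]; (intro k_linear_intros)?) (simp add: counit_one)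
  finally show ?thesis
    using idempotent_right_invertible_eq_one[OF \<open>c * c = c\<close>] unfolding c_def by blast
qed

abbreviation u :: 'h where
  "u \<equiv> drinfeld_u S R"

lemma drinfeld_u_tsum: "u = tsum R (\<lambda>r s. S s * r)"
  by (simp add: drinfeld_u_def tsum_def)

lemma R_snd_drinfeld_u_R_fst: "tsum R (\<lambda>r s. s * u * r) = 1"
proof -
  have "tsum R (\<lambda>r s. tsum (\<Delta> s) (\<lambda>x y. x * S y * r)) =
      tsum R (\<lambda>r s. tsum R (\<lambda>r' s'. s' * S s * (r * r')))"
    by (rule R_comult_snd; intro k_linear_intros)
  moreover have "tsum R (\<lambda>r s. tsum (\<Delta> s) (\<lambda>x y. x * S y * r)) = 1"
    by (simp add: tsum_mult_right[symmetric] antipode_right R_counit_snd)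
  moreover have "tsum R (\<lambda>r s. s * u * r) = tsum R (\<lambda>r s. tsum R (\<lambda>r' s'. s' * S s * (r * r')))"
    unfolding drinfeld_u_tsum
    by (simp add: tsum_mult_left tsum_mult_right, subst tsum_swap) (simp add: mult.assoc)
  ultimately show ?thesis by simp
qed

lemma antipode_square_antipode: "tsum (\<Delta> w) (\<lambda>p q. S (S q) * S p) = sc (\<epsilon> w) 1"
  using arg_cong[OF antipode_right[of w], of S]
  by (simp add: antipode_tsum antipode_mult antipode_scale)

definition u_twist :: "('h \<Rightarrow> 'h) \<Rightarrow> 'h \<Rightarrow> 'h" where
  "u_twist F a = tsum (\<Delta> a) (\<lambda>x p. S p * (u * F x))"

lemma k_linear_u_twist: "k_linear F \<Longrightarrow> k_linear (u_twist F)"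
  unfolding u_twist_def by (intro k_linear_intros)

lemma drinfeld_u_mult:
  assumes "k_linear F"
  shows "u * F x = tsum (\<Delta> x) (\<lambda>a q. S (S q) * u_twist F a)"
proof -
  have "u * F x = tsum (\<Delta> x) (\<lambda>y w. sc (\<epsilon> w) 1 * (u * F y))"
    using HH.linear_tsum[OF assms, of "\<Delta> x" "\<lambda>a b. sc (\<epsilon> b) a"]
    by (simp add: counit_right HH.linear_scale[OF assms] tsum_mult_left)
  also have "\<dots> = tsum (\<Delta> x) (\<lambda>y w. tsum (\<Delta> w) (\<lambda>p q. S (S q) * S p * (u * F y)))"
    by (simp add: antipode_square_antipode[symmetric] tsum_mult_right)
  also have "\<dots> = tsum (\<Delta> x) (\<lambda>a q. tsum (\<Delta> a) (\<lambda>y p. S (S q) * S p * (u * F y)))"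
    by (rule comult_coassoc[symmetric]; intro k_linear_intros assms)
  also have "\<dots> = tsum (\<Delta> x) (\<lambda>a q. S (S q) * u_twist F a)"
    by (simp add: u_twist_def tsum_mult_left mult.assoc)
  finally show ?thesis .
qed

lemma R_snd_u_twist_id_R_fst: "tsum R (\<lambda>r s. s * w * u_twist (\<lambda>x. x) r) = w * u"
proof -
  have twist: "u_twist (\<lambda>x. x) r = tsum (\<Delta> r) (\<lambda>x p. tsum R (\<lambda>r' s'. S (s' * p) * (r' * x)))" for r
    by (simp add: u_twist_def drinfeld_u_tsum tsum_mult_left tsum_mult_right antipode_mult mult.assoc)
  have "tsum R (\<lambda>r s. s * w * u_twist (\<lambda>x. x) r) =
      tsum R (\<lambda>r s. tsum (\<Delta> r) (\<lambda>x p. tsum R (\<lambda>r' s'. s * w * (S (s' * p) * (r' * x)))))"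
    by (simp add: twist tsum_mult_left)
  also have "\<dots> = tsum R (\<lambda>r s. tsum (\<Delta> r) (\<lambda>x p. tsum R (\<lambda>r' s'. s * w * (S (x * s') * (p * r')))))"
    by (rule R_comult_fst_op[symmetric, where \<Phi>="\<lambda>A B t. t * w * (S B * A)"]; intro k_linear_intros)
  also have "\<dots> = tsum R (\<lambda>r s. tsum R (\<lambda>r' s'. tsum (\<Delta> r) (\<lambda>x p. s * w * S s' * (S x * p) * r')))"
    by (subst tsum_swap) (simp add: antipode_mult mult.assoc)
  also have "\<dots> = tsum R (\<lambda>r s. tsum R (\<lambda>r' s'. sc (\<epsilon> r) (s * w * S s' * r')))"
  proof -
    have "tsum (\<Delta> r) (\<lambda>x p. a * (S x * p) * b) = sc (\<epsilon> r) (a * b)" for r a b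
      by (simp add: tsum_mult_left[symmetric] tsum_mult_right[symmetric] antipode_left)
    then show ?thesis by simp
  qed
  also have "\<dots> = tsum R (\<lambda>r s. sc (\<epsilon> r) s) * w * tsum R (\<lambda>r' s'. S s' * r')"
    by (subst tsum_mult_right, subst tsum_mult_right, simp only: tsum_mult_left) (simp add: mult.assoc)
  finally show ?thesis
    by (simp add: R_counit_fst drinfeld_u_tsum)
qed

lemma drinfeld_u_left_inverse: "tsum R (\<lambda>r s. s * S (S r)) * u = 1"
proof -
  have "1 = tsum R (\<lambda>r s. s * (u * r))"
    using R_snd_drinfeld_u_R_fst by (simp add: mult.assoc)
  also have "\<dots> = tsum R (\<lambda>r s. tsum (\<Delta> r) (\<lambda>a q. s * S (S q) * u_twist (\<lambda>x. x) a))"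
    using drinfeld_u_mult[OF k_linear_id] by (simp add: tsum_mult_left mult.assoc)
  also have "\<dots> = tsum R (\<lambda>r s. tsum R (\<lambda>r' s'. s * s' * S (S r') * u_twist (\<lambda>x. x) r))"
    by (rule R_comult_fst[where \<Phi>="\<lambda>a q t. t * S (S q) * u_twist (\<lambda>x. x) a"];
        intro k_linear_intros k_linear_u_twist)
  also have "\<dots> = tsum R (\<lambda>r s. s * tsum R (\<lambda>r' s'. s' * S (S r')) * u_twist (\<lambda>x. x) r)"
    by (simp add: tsum_mult_left tsum_mult_right mult.assoc)
  finally show ?thesis
    by (simp add: R_snd_u_twist_id_R_fst)
qed

abbreviation T :: "'h \<Rightarrow> 'h" where
  "T \<equiv> T_map \<Delta> S R"

lemma T_map_nu_alt: "T h = tsum R (\<lambda>r s. tsum (\<Delta> h) (\<lambda>a z. tsum (\<Delta> a) (\<lambda>x y.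
    tsum R (\<lambda>r' s'. (r * y * r') * (S s' * S x * s * z)))))"
  unfolding T_map_def tsum_def[symmetric] by (rule tsum_nu_alt; intro k_linear_intros)

lemma k_linear_T_map: "k_linear T"
  unfolding T_map_nu_alt[abs_def] by (intro k_linear_intros)

lemma mult_T_map: "c * T y = tsum R (\<lambda>r s. tsum (\<Delta> y) (\<lambda>a z. tsum (\<Delta> a) (\<lambda>x x'.
    tsum R (\<lambda>r' s'. (S s' * S x * s * z) * (c * (r * x' * r'))))))"
proof -
  have "c * T y = tsum (nu \<Delta> S R y) (\<lambda>a b. c * (a * b))"
    by (simp add: T_map_def tsum_def[symmetric] tsum_mult_left)
  also have "\<dots> = tsum (nu \<Delta> S R y) (\<lambda>a b. b * (c * a))"
    by (rule tsum_nu_central; (intro k_linear_intros)?) (simp add: central_def mult.assoc)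
  also have "\<dots> = tsum R (\<lambda>r s. tsum (\<Delta> y) (\<lambda>a z. tsum (\<Delta> a) (\<lambda>x x'.
      tsum R (\<lambda>r' s'. (S s' * S x * s * z) * (c * (r * x' * r'))))))"
    by (rule tsum_nu_alt; intro k_linear_intros)
  finally show ?thesis .
qed

lemma comult_antipode_collapse:
  assumes lin1: "\<And>t. k_linear (\<lambda>a. G a t)" and lin2: "\<And>a. k_linear (G a)"
  shows "tsum (\<Delta> x) (\<lambda>y p. tsum (\<Delta> y) (\<lambda>a z. G a (z * S p))) = G x 1"
proof -
  have compose: "k_linear f \<Longrightarrow> k_linear (\<lambda>x. G a (f x))" for f a
    using Vector_Spaces.linear_compose[OF _ lin2] by (simp add: o_def)
  have "tsum (\<Delta> x) (\<lambda>y p. tsum (\<Delta> y) (\<lambda>a z. G a (z * S p))) =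
      tsum (\<Delta> x) (\<lambda>a w. tsum (\<Delta> w) (\<lambda>z p. G a (z * S p)))"
    by (rule comult_coassoc; intro k_linear_intros lin1 compose)
  also have "\<dots> = tsum (\<Delta> x) (\<lambda>a w. sc (\<epsilon> w) (G a 1))"
    by (simp add: HH.linear_tsum[OF lin2, symmetric] antipode_right HH.linear_scale[OF lin2])
  also have "\<dots> = G x 1"
    using HH.linear_tsum[OF lin1, of "\<Delta> x" "\<lambda>a w. sc (\<epsilon> w) a"]
    by (simp add: counit_right HH.linear_scale[OF lin1])
  finally show ?thesis .
qed

lemma u_twist_T_map: "u_twist T x = sc (\<epsilon> x) u"
proof -
  define G where "G a t = tsum R (\<lambda>r s. tsum (\<Delta> a) (\<lambda>y y'. tsum R (\<lambda>r' s'.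
      (S s' * S y * s) * t * (u * (r * y' * r')))))" for a t
  have "S p * (u * T y) = tsum (\<Delta> y) (\<lambda>a z. G a (z * S p))" for y p
  proof -
    have "S p * (u * T y) = (S p * u) * T y"
      by (simp add: mult.assoc)
    also have "\<dots> = tsum (\<Delta> y) (\<lambda>a z. tsum R (\<lambda>r s. tsum (\<Delta> a) (\<lambda>x x'.
        tsum R (\<lambda>r' s'. (S s' * S x * s * z) * (S p * u * (r * x' * r'))))))"
      unfolding mult_T_map by (rule tsum_swap)
    also have "\<dots> = tsum (\<Delta> y) (\<lambda>a z. G a (z * S p))"
      by (simp add: G_def mult.assoc)
    finally show ?thesis .
  qed
  then have "u_twist T x = tsum (\<Delta> x) (\<lambda>y p. tsum (\<Delta> y) (\<lambda>a z. G a (z * S p)))"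
    by (simp add: u_twist_def)
  also have "\<dots> = G x 1"
    by (rule comult_antipode_collapse) (unfold G_def; intro k_linear_intros)+
  also have "\<dots> = tsum (\<Delta> x) (\<lambda>y y'. tsum R (\<lambda>r' s'. tsum R (\<lambda>r s.
      S s' * S y * (s * u * r) * (y' * r'))))"
    unfolding G_def by (subst tsum_swap, rule tsum_cong, subst tsum_swap) (simp add: mult.assoc)
  also have "\<dots> = tsum (\<Delta> x) (\<lambda>y y'. tsum R (\<lambda>r' s'. S s' * (S y * y') * r'))"
  proof -
    have "tsum R (\<lambda>r s. a * (s * u * r) * b) = a * b" for a b
      by (simp add: tsum_mult_left[symmetric] tsum_mult_right[symmetric] R_snd_drinfeld_u_R_fst)
    then show ?thesis
      by (simp only:) (simp add: mult.assoc)
  qed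
  also have "\<dots> = tsum R (\<lambda>r' s'. S s' * tsum (\<Delta> x) (\<lambda>y y'. S y * y') * r')"
    by (subst tsum_swap) (simp only: tsum_mult_left tsum_mult_right)
  also have "\<dots> = sc (\<epsilon> x) u"
    by (simp add: antipode_left drinfeld_u_tsum H.scale_tsum_right)
  finally show ?thesis .
qed

lemma drinfeld_u_mult_T_map: "u * T x = S (S x) * u"
proof -
  have "u * T x = tsum (\<Delta> x) (\<lambda>a q. S (S q) * sc (\<epsilon> a) u)"
    by (simp add: drinfeld_u_mult[OF k_linear_T_map] u_twist_T_map)
  also have "\<dots> = S (S (tsum (\<Delta> x) (\<lambda>a q. sc (\<epsilon> a) q))) * u"
    by (simp add: antipode_tsum antipode_scale tsum_mult_right)
  finally show ?thesis
    by (simp add: counit_left)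
qed

lemma drinfeld_u_right_inverse: "u * tsum R (\<lambda>r s. s * S (S r)) = 1"
proof -
  let ?v = "tsum R (\<lambda>r s. s * S (S r))"
  obtain h where h: "S (S h) = ?v"
    using antipode_bij by (metis bij_pointE)
  have "u * T h = 1"
    using drinfeld_u_mult_T_map[of h] h drinfeld_u_left_inverse by simp
  moreover have "?v = T h"
    by (metis \<open>u * T h = 1\<close> drinfeld_u_left_inverse mult.assoc mult_1_left mult_1_right)
  ultimately show ?thesis by simp
qed

lemma antipode_square_conj: "S (S h) = u * T h * tsum R (\<lambda>r s. s * S (S r))"
  by (metis drinfeld_u_mult_T_map drinfeld_u_right_inverse mult.assoc mult_1_right)

end

theorem proposition3p2:
  fixes sc :: "'k::field \<Rightarrow> 'h::ring_1 \<Rightarrow> 'h"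
    and \<Delta> :: "'h \<Rightarrow> ('h \<times> 'h) list" and \<epsilon> :: "'h \<Rightarrow> 'k" and S :: "'h \<Rightarrow> 'h"
    and R :: "('h \<times> 'h) list"
  assumes "semiquasitriangular sc \<Delta> \<epsilon> S R"
  shows "drinfeld_u S R * (\<Sum>(r,s)\<leftarrow>R. s * S (S r)) = 1
       \<and> (\<Sum>(r,s)\<leftarrow>R. s * S (S r)) * drinfeld_u S R = 1
       \<and> (\<forall>h. S (S h) = drinfeld_u S R * T_map \<Delta> S R h * (\<Sum>(r,s)\<leftarrow>R. s * S (S r)))"
proof -
  interpret semiquasitriangular_hopf sc \<Delta> \<epsilon> S R
    using assms by unfold_locales
  show ?thesis
    using drinfeld_u_right_inverse drinfeld_u_left_inverse antipode_square_conj
    unfolding tsum_def by blast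
qed

end
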